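(* Let $n\ge 1$ and let $\overrightarrow{K_{1,n}}$ be an orientation of the star $K_{1,n}$ in which exactly $t$ of the $n$ leaves are sources, $0\le t\le n$. Then $\overrightarrow{K_{1,n}}$ is $\{1\}$-antimagic if and only if either $n=1$, or $n=2$ and $t=1$.
   Context: An oriented graph $\overrightarrow{G}$ is a directed graph obtained from a simple undirected graph by giving each edge one direction. For vertices $u,v$, $d(u,v)$ is the length of a shortest directed path from $u$ to $v$ ($d(u,u)=0$, and $d(u,v)=\infty$ if there is no such path). Let $\partial=\max\{d(u,v)<\infty : u,v\in V(\overrightarrow{G})\}$. A distance set is a nonempty $D\subseteq\{0,1,\dots,\partial\}$. The $D$-neighborhood of $u$ is $N_D(u)=\{v\in V(\overrightarrow{G}) : d(u,v)\in D\}$. For a bijection $f:V(\overrightarrow{G})\to\{1,\dots,|V(\overrightarrow{G})|\}$, the $D$-weight of $u$ is $\omega_D(u)=\sum_{v\in N_D(u)} f(v)$ (empty sum $=0$). $\overrightarrow{G}$ is $D$-antimagic if $D\subseteq\{0,\dots,\partial\}$ and there is such a bijection $f$ with all $D$-weights pairwise distinct. In an oriented star $\overrightarrow{K_{1,n}}$ the center is the vertex of degree $n$ and the leaves are the vertices of degree $1$; a leaf is a source if its arc points toward the center, and a sink otherwise. *)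

theory Defs
  imports Main "HOL-Library.Extended_Nat"
begin

definition oriented_graph :: "'a set \<Rightarrow> ('a \<times> 'a) set \<Rightarrow> bool" where
  "oriented_graph V A \<longleftrightarrow> finite V \<and> A \<subseteq> V \<times> V \<and>
     (\<forall>u. (u, u) \<notin> A) \<and> (\<forall>u v. (u, v) \<in> A \<longrightarrow> (v, u) \<notin> A)"

definition dist :: "('a \<times> 'a) set \<Rightarrow> 'a \<Rightarrow> 'a \<Rightarrow> enat" where
  "dist A u v = (if \<exists>k. (u, v) \<in> A ^^ k then enat (LEAST k. (u, v) \<in> A ^^ k) else \<infinity>)"

definition max_dist :: "'a set \<Rightarrow> ('a \<times> 'a) set \<Rightarrow> nat" where
  "max_dist V A = Max {k. \<exists>u\<in>V. \<exists>v\<in>V. dist A u v = enat k}"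

definition D_neighborhood :: "'a set \<Rightarrow> ('a \<times> 'a) set \<Rightarrow> nat set \<Rightarrow> 'a \<Rightarrow> 'a set" where
  "D_neighborhood V A D u = {v \<in> V. dist A u v \<in> enat ` D}"

definition D_weight :: "'a set \<Rightarrow> ('a \<times> 'a) set \<Rightarrow> nat set \<Rightarrow> ('a \<Rightarrow> nat) \<Rightarrow> 'a \<Rightarrow> nat" where
  "D_weight V A D f u = (\<Sum>v\<in>D_neighborhood V A D u. f v)"

definition D_antimagic :: "'a set \<Rightarrow> ('a \<times> 'a) set \<Rightarrow> nat set \<Rightarrow> bool" where
  "D_antimagic V A D \<longleftrightarrow> D \<noteq> {} \<and> D \<subseteq> {0..max_dist V A} \<and>
     (\<exists>f. bij_betw f V {1..card V} \<and> inj_on (D_weight V A D f) V)"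

definition oriented_star :: "'a set \<Rightarrow> ('a \<times> 'a) set \<Rightarrow> 'a \<Rightarrow> nat \<Rightarrow> nat \<Rightarrow> bool" where
  "oriented_star V A c n t \<longleftrightarrow> finite V \<and> c \<in> V \<and> card V = n + 1 \<and>
     A \<subseteq> ((V - {c}) \<times> {c}) \<union> ({c} \<times> (V - {c})) \<and>
     (\<forall>v \<in> V - {c}. ((v, c) \<in> A \<or> (c, v) \<in> A) \<and> \<not> ((v, c) \<in> A \<and> (c, v) \<in> A)) \<and>
     card {v \<in> V - {c}. (v, c) \<in> A} = t"

end

theory Submission
  imports Defs
begin

text \<open>For D = {1} the weight of a vertex is the label sum of its out-neighbours. In an oriented
  star every source leaf has the centre as its only out-neighbour and every sink leaf has none,
  so all sources share the weight f c and all sinks the weight 0: an injective weighting forces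
  at most one source and at most one sink. Conversely, with at most one leaf of each kind the
  weights f c, 0 and that of the centre (0, or the label of the sink) are distinct for every
  labelling.\<close>

lemma dist_eq_1_iff:
  assumes "irrefl A"
  shows "dist A u v = 1 \<longleftrightarrow> (u, v) \<in> A"
proof
  assume dist_1: "dist A u v = 1"
  then have reachable: "\<exists>k. (u, v) \<in> A ^^ k"
    unfolding dist_def by (auto split: if_splits)
  with dist_1 have "(LEAST k. (u, v) \<in> A ^^ k) = 1"
    unfolding dist_def by (simp add: one_enat_def)
  with LeastI_ex[OF reachable] show "(u, v) \<in> A" by simp
next
  assume arc: "(u, v) \<in> A"
  then have "u \<noteq> v" using assms by (auto simp: irrefl_def)
  have "(LEAST k. (u, v) \<in> A ^^ k) = 1"
  proof (rule Least_equality)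
    show "(u, v) \<in> A ^^ 1" using arc by simp
    fix k assume "(u, v) \<in> A ^^ k"
    with \<open>u \<noteq> v\<close> show "1 \<le> k" by (cases k) auto
  qed
  moreover have "\<exists>k. (u, v) \<in> A ^^ k" using arc by (metis relpow_1)
  ultimately show "dist A u v = 1" unfolding dist_def by (simp add: one_enat_def)
qed

lemma D_weight_1_eq_out_sum:
  assumes "irrefl A"
  shows "D_weight V A {1} f u = (\<Sum>v \<in> {v \<in> V. (u, v) \<in> A}. f v)"
proof -
  have "dist A u v \<in> enat ` {1} \<longleftrightarrow> (u, v) \<in> A" for v
    using dist_eq_1_iff[OF assms] by (simp add: one_enat_def)
  then show ?thesis unfolding D_weight_def D_neighborhood_def by simp
qed

lemma max_dist_ge_1:
  assumes "finite V" "irrefl A" "u \<in> V" "v \<in> V" "(u, v) \<in> A"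
  shows "1 \<le> max_dist V A"
proof -
  let ?dists = "{k. \<exists>u\<in>V. \<exists>v\<in>V. dist A u v = enat k}"
  have "?dists \<subseteq> (\<lambda>(u, v). the_enat (dist A u v)) ` (V \<times> V)"
    by (force simp: image_iff)
  then have "finite ?dists"
    using \<open>finite V\<close> by (meson finite_SigmaI finite_imageI finite_subset)
  moreover have "1 \<in> ?dists"
    using assms dist_eq_1_iff[of A u v] by (auto simp: one_enat_def)
  ultimately show ?thesis unfolding max_dist_def by (simp add: Max_ge)
qed

lemma card_le_1_if_inj_on_const:
  assumes "inj_on g V" "S \<subseteq> V" "\<And>x. x \<in> S \<Longrightarrow> g x = a"
  shows "card S \<le> 1"
proof (cases "finite S")
  case True
  have "x = y" if "x \<in> S" "y \<in> S" for x y
    using assms that by (metis inj_onD subsetD)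
  with True show ?thesis using card_le_Suc0_iff_eq by (metis One_nat_def)
qed simp

definition star_sources :: "'a set \<Rightarrow> ('a \<times> 'a) set \<Rightarrow> 'a \<Rightarrow> 'a set" where
  "star_sources V A c = {v \<in> V - {c}. (v, c) \<in> A}"

definition star_sinks :: "'a set \<Rightarrow> ('a \<times> 'a) set \<Rightarrow> 'a \<Rightarrow> 'a set" where
  "star_sinks V A c = {v \<in> V - {c}. (c, v) \<in> A}"

context
  fixes V :: "'a set" and A :: "('a \<times> 'a) set" and c :: 'a and n t :: nat
  assumes star: "oriented_star V A c n t"
begin

lemma finite_star: "finite V"
  and star_centre: "c \<in> V"
  and card_star: "card V = n + 1"
  and star_arcs: "A \<subseteq> ((V - {c}) \<times> {c}) \<union> ({c} \<times> (V - {c}))"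
  and star_leaf_orientation: "\<And>v. v \<in> V - {c} \<Longrightarrow> ((v, c) \<in> A \<longleftrightarrow> (c, v) \<notin> A)"
  and card_star_sources: "card (star_sources V A c) = t"
  using star unfolding oriented_star_def star_sources_def by blast+

lemma irrefl_star: "irrefl A"
  using star_arcs by (auto simp: irrefl_def)

lemma star_vertex_cases:
  assumes "v \<in> V"
  obtains "v = c" | "v \<in> star_sources V A c" | "v \<in> star_sinks V A c"
  using assms star_leaf_orientation unfolding star_sources_def star_sinks_def by blast

lemma star_sinks_eq: "star_sinks V A c = (V - {c}) - star_sources V A c"
  using star_leaf_orientation unfolding star_sources_def star_sinks_def by auto

lemma card_star_sinks: "card (star_sinks V A c) = n - t"
proof -
  have "card (V - {c}) = n" using finite_star star_centre card_star by simp
  then show ?thesis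
    unfolding star_sinks_eq using finite_star card_star_sources
    by (subst card_Diff_subset) (auto simp: star_sources_def)
qed

lemma D_weight_star_centre: "D_weight V A {1} f c = sum f (star_sinks V A c)"
  unfolding D_weight_1_eq_out_sum[OF irrefl_star] star_sinks_def
  using star_arcs by (intro sum.cong) auto

lemma D_weight_star_source:
  "v \<in> star_sources V A c \<Longrightarrow> D_weight V A {1} f v = f c"
  unfolding D_weight_1_eq_out_sum[OF irrefl_star] star_sources_def
  using star_centre star_arcs by (subst sum.cong[of _ "{c}"]) auto

lemma D_weight_star_sink:
  "v \<in> star_sinks V A c \<Longrightarrow> D_weight V A {1} f v = 0"
  unfolding D_weight_1_eq_out_sum[OF irrefl_star] star_sinks_def
  using star_arcs star_leaf_orientation by (subst sum.cong[of _ "{}"]) auto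

lemma star_leaves_unique_if_card_le_1:
  assumes "card (star_sources V A c) \<le> 1" "card (star_sinks V A c) \<le> 1"
  shows "x \<in> star_sources V A c \<Longrightarrow> y \<in> star_sources V A c \<Longrightarrow> x = y"
    and "x \<in> star_sinks V A c \<Longrightarrow> y \<in> star_sinks V A c \<Longrightarrow> x = y"
proof -
  have "finite (star_sources V A c)" "finite (star_sinks V A c)"
    using finite_star unfolding star_sources_def star_sinks_def by auto
  then show "x \<in> star_sources V A c \<Longrightarrow> y \<in> star_sources V A c \<Longrightarrow> x = y"
    and "x \<in> star_sinks V A c \<Longrightarrow> y \<in> star_sinks V A c \<Longrightarrow> x = y"
    using assms by (auto simp: card_le_Suc0_iff_eq)
qed

lemma max_dist_star_ge_1:
  assumes "1 \<le> n"
  shows "1 \<le> max_dist V A"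
proof -
  have "card (V - {c}) \<noteq> 0" using finite_star star_centre card_star assms by simp
  then obtain v where "v \<in> V" "v \<noteq> c" by (metis card.empty ex_in_conv DiffE insertI1)
  note ge_1 = max_dist_ge_1[OF finite_star irrefl_star]
  show ?thesis
  proof (cases "(v, c) \<in> A")
    case True
    show ?thesis by (rule ge_1[OF \<open>v \<in> V\<close> star_centre True])
  next
    case False
    with \<open>v \<in> V\<close> \<open>v \<noteq> c\<close> star_leaf_orientation have "(c, v) \<in> A" by blast
    show ?thesis by (rule ge_1[OF star_centre \<open>v \<in> V\<close> \<open>(c, v) \<in> A\<close>])
  qed
qed

lemma star_leaves_le_1_if_inj_on_D_weight:
  assumes "inj_on (D_weight V A {1} f) V"
  shows "card (star_sources V A c) \<le> 1" and "card (star_sinks V A c) \<le> 1"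
proof -
  show "card (star_sources V A c) \<le> 1"
    by (rule card_le_1_if_inj_on_const[OF assms _ D_weight_star_source])
      (auto simp: star_sources_def)
  show "card (star_sinks V A c) \<le> 1"
    by (rule card_le_1_if_inj_on_const[OF assms _ D_weight_star_sink])
      (auto simp: star_sinks_def)
qed

lemma inj_on_D_weight_star:
  assumes sources: "card (star_sources V A c) \<le> 1" and sinks: "card (star_sinks V A c) \<le> 1"
    and f_inj: "inj_on f V" and f_pos: "\<And>v. v \<in> V \<Longrightarrow> 0 < f v"
  shows "inj_on (D_weight V A {1} f) V"
proof -
  define w where "w = D_weight V A {1} f"
  have w_centre: "w c = sum f (star_sinks V A c)"
    and w_source: "\<And>v. v \<in> star_sources V A c \<Longrightarrow> w v = f c"
    and w_sink: "\<And>v. v \<in> star_sinks V A c \<Longrightarrow> w v = 0"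
    unfolding w_def by (fact D_weight_star_centre D_weight_star_source D_weight_star_sink)+
  note unique = star_leaves_unique_if_card_le_1[OF sources sinks]
  have sinks_V: "star_sinks V A c \<subseteq> V" unfolding star_sinks_def by auto
  have centre_source: "w v \<noteq> w c" if v: "v \<in> star_sources V A c" for v
  proof (cases "star_sinks V A c = {}")
    case True
    then show ?thesis using w_centre w_source[OF v] f_pos[OF star_centre] by simp
  next
    case False
    then obtain k where k: "star_sinks V A c = {k}" using unique(2) by blast
    then have "k \<in> V" "k \<noteq> c" unfolding star_sinks_def by auto
    then have "f k \<noteq> f c" using f_inj star_centre by (metis inj_onD)
    then show ?thesis using w_centre w_source[OF v] k by simp
  qed
  have centre_sink: "w v \<noteq> w c" if v: "v \<in> star_sinks V A c" for v
  proof -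
    have "0 < f v" using f_pos sinks_V v by blast
    also have "f v \<le> sum f (star_sinks V A c)"
      using v sinks_V finite_star by (intro member_le_sum) (auto intro: finite_subset)
    finally show ?thesis using w_centre w_sink[OF v] by simp
  qed
  have source_sink: "w u \<noteq> w v" if "u \<in> star_sources V A c" "v \<in> star_sinks V A c" for u v
    using w_source[OF that(1)] w_sink[OF that(2)] f_pos[OF star_centre] by simp
  have "inj_on w V"
  proof (rule inj_onI)
    fix x y assume "x \<in> V" "y \<in> V" "w x = w y"
    moreover have "v = c \<or> v \<in> star_sources V A c \<or> v \<in> star_sinks V A c" if "v \<in> V" for v
      using that by (cases rule: star_vertex_cases) auto
    ultimately show "x = y"
      using centre_source centre_sink source_sink unique by metis
  qed
  then show ?thesis unfolding w_def .
qed

lemma D_antimagic_1_star_iff: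
  assumes "1 \<le> n"
  shows "D_antimagic V A {1} \<longleftrightarrow>
    card (star_sources V A c) \<le> 1 \<and> card (star_sinks V A c) \<le> 1"
proof
  assume "D_antimagic V A {1}"
  then obtain f where "inj_on (D_weight V A {1} f) V" unfolding D_antimagic_def by blast
  then show "card (star_sources V A c) \<le> 1 \<and> card (star_sinks V A c) \<le> 1"
    using star_leaves_le_1_if_inj_on_D_weight by simp
next
  assume leaves: "card (star_sources V A c) \<le> 1 \<and> card (star_sinks V A c) \<le> 1"
  obtain f where f: "bij_betw f V {1..card V}"
    using finite_same_card_bij[OF finite_star, of "{1..card V}"] by auto
  have "inj_on (D_weight V A {1} f) V"
  proof (rule inj_on_D_weight_star)
    show "inj_on f V" using f by (rule bij_betw_imp_inj_on)
    show "0 < f v" if "v \<in> V" for v using bij_betwE[OF f] that by fastforce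
  qed (use leaves in auto)
  then show "D_antimagic V A {1}"
    unfolding D_antimagic_def using f max_dist_star_ge_1[OF assms] by auto
qed

end

theorem mainTheorem1:
  fixes V :: "'a set" and A :: "('a \<times> 'a) set" and c :: 'a and n t :: nat
  assumes "n \<ge> 1" and "t \<le> n" and "oriented_star V A c n t"
  shows "D_antimagic V A {1} \<longleftrightarrow> (n = 1 \<or> (n = 2 \<and> t = 1))"
proof -
  have "D_antimagic V A {1} \<longleftrightarrow> t \<le> 1 \<and> n - t \<le> 1"
    using D_antimagic_1_star_iff[OF assms(3,1)]
    by (simp add: card_star_sources[OF assms(3)] card_star_sinks[OF assms(3)])
  also have "\<dots> \<longleftrightarrow> n = 1 \<or> (n = 2 \<and> t = 1)"
    using assms(1,2) by auto
  finally show ?thesis .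
qed

end
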